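(* For the modified navigation function $\mathcal{V}_{nav}$ defined below, for all $(p,\theta)\in\mathcal{X}_p\times\mathbb{R}$, $$\nabla_p\mathcal{V}_{nav}(p,\theta)=\nabla_pV_{nav}(p)+(I_2-\mathcal{R}(\theta))^\top(p_d-p_o),$$ $$\nabla_\theta\mathcal{V}_{nav}(p,\theta)=\gamma_\theta\theta-(p-p_o)^\top\Delta\,\mathcal{R}(\theta)^\top(p_o-p_d),$$ and the set of critical points $C_{\mathcal{V}_{nav}}:=\{(p,\theta)\in\mathcal{X}_p\times\mathbb{R}:\nabla_p\mathcal{V}_{nav}(p,\theta)=0,\ \nabla_\theta\mathcal{V}_{nav}(p,\theta)=0\}$ equals $C_{V_{nav}}\times\{0\}$, where $C_{V_{nav}}=\{p\in\mathcal{X}_p:\nabla_pV_{nav}(p)=0\}$.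
   Context: Obstacle $\mathcal{O}=\{z\in\mathbb{R}^2:\|z-p_o\|\le r_o\}$ with center $p_o\in\mathbb{R}^2$ and radius $r_o>0$; safety margin $\varepsilon>0$; free space $\mathcal{X}_p=\{p\in\mathbb{R}^2:\|p-p_o\|\ge r_o+\varepsilon\}$. Distance $d_o(p)=\|p-p_o\|-r_o$. Destination $p_d\in\mathcal{X}_p$, $r_d:=d_o(p_d)$, and $r_s\in(\varepsilon,r_d)$. Barrier $\phi(z)=(z-r_s)^2\ln(r_s/z)$ for $z\in(0,r_s]$ and $\phi(z)=0$ for $z>r_s$. Navigation function $V_{nav}(p)=\frac12\|p-p_d\|^2+\varrho\,\phi(d_o(p))$ with $\varrho>0$; its gradient is $\nabla_pV_{nav}(p)=p-p_d+\varrho\,\phi'(d_o(p))\frac{p-p_o}{\|p-p_o\|}$. Rotation $\mathcal{R}(\theta)=\exp(\theta\Delta)=\begin{bmatrix}\cos\theta&-\sin\theta\\ \sin\theta&\cos\theta\end{bmatrix}$ with $\Delta=\begin{bmatrix}0&-1\\1&0\end{bmatrix}$. Transformation $\mathcal{T}(p,\theta)=p_o+\mathcal{R}(\theta)(p-p_o)$. Modified navigation function $\mathcal{V}_{nav}(p,\theta)=V_{nav}(\mathcal{T}(p,\theta))+\frac{\gamma_\theta}{2}\theta^2$ with $\gamma_\theta>0$, equivalently $\mathcal{V}_{nav}(p,\theta)=\frac12\|\mathcal{T}(p,\theta)-p_d\|^2+\varrho\phi(d_o(p))+\frac{\gamma_\theta}{2}\theta^2$. *)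

theory Defs
  imports "HOL-Analysis.Analysis"
begin

definition Rot :: "real \<Rightarrow> real^2^2" where
  "Rot \<theta> = vector [vector [cos \<theta>, - sin \<theta>], vector [sin \<theta>, cos \<theta>]]"

definition Dlt :: "real^2^2" where
  "Dlt = vector [vector [0, -1], vector [1, 0]]"

definition Tr :: "real^2 \<Rightarrow> real^2 \<Rightarrow> real \<Rightarrow> real^2" where
  "Tr p_o p \<theta> = p_o + Rot \<theta> *v (p - p_o)"

definition d_o :: "real^2 \<Rightarrow> real \<Rightarrow> real^2 \<Rightarrow> real" where
  "d_o p_o r_o p = norm (p - p_o) - r_o"

definition Xp :: "real^2 \<Rightarrow> real \<Rightarrow> real \<Rightarrow> (real^2) set" where
  "Xp p_o r_o \<epsilon> = {p. norm (p - p_o) \<ge> r_o + \<epsilon>}"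

text \<open>Barrier; the branch z \<le> 0 is never used on the free space.\<close>
definition phi :: "real \<Rightarrow> real \<Rightarrow> real" where
  "phi r_s z = (if z \<le> r_s then (z - r_s)^2 * ln (r_s / z) else 0)"

definition Vnav :: "real^2 \<Rightarrow> real \<Rightarrow> real^2 \<Rightarrow> real \<Rightarrow> real \<Rightarrow> real^2 \<Rightarrow> real" where
  "Vnav p_o r_o p_d r_s \<rho> p = 1/2 * (norm (p - p_d))^2 + \<rho> * phi r_s (d_o p_o r_o p)"

definition gradVnav :: "real^2 \<Rightarrow> real \<Rightarrow> real^2 \<Rightarrow> real \<Rightarrow> real \<Rightarrow> real^2 \<Rightarrow> real^2" where
  "gradVnav p_o r_o p_d r_s \<rho> p =
     p - p_d + (\<rho> * deriv (phi r_s) (d_o p_o r_o p)) *\<^sub>R ((1 / norm (p - p_o)) *\<^sub>R (p - p_o))"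

definition Vmod :: "real^2 \<Rightarrow> real \<Rightarrow> real^2 \<Rightarrow> real \<Rightarrow> real \<Rightarrow> real \<Rightarrow> real^2 \<Rightarrow> real \<Rightarrow> real" where
  "Vmod p_o r_o p_d r_s \<rho> \<gamma> p \<theta> = Vnav p_o r_o p_d r_s \<rho> (Tr p_o p \<theta>) + \<gamma> / 2 * \<theta>^2"

end

theory Submission
  imports Defs
begin

text \<open>
  The barrier term of the modified function does not depend on \<theta>, since the rotation about p_o
  preserves the distance to p_o. Hence the p-gradient is that of the rotated quadratic term plus the
  usual radial barrier gradient, and the \<theta>-derivative comes from the quadratic term alone.
  At a critical point the p-equation reads (1 + k) (p - p_o) + R(\<theta>)^T (p_o - p_d) = 0 for a scalar k,
  so p - p_o is collinear with w = R(\<theta>)^T (p_o - p_d), and the \<theta>-equation becomes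
  \<gamma> \<theta> = (p - p_o) \<bullet> \<Delta> w = 0 by skew-symmetry of \<Delta>. So \<theta> = 0, where both equations reduce
  to the gradient of V_nav.
\<close>

lemma Rot_mult_components [simp]:
  "(Rot t *v x) $ 1 = cos t * x$1 - sin t * x$2"
  "(Rot t *v x) $ 2 = sin t * x$1 + cos t * x$2"
  by (simp_all add: Rot_def matrix_vector_mult_def sum_2)

lemma vector_mult_Rot_components [simp]:
  "(x v* Rot t) $ 1 = cos t * x$1 + sin t * x$2"
  "(x v* Rot t) $ 2 = - sin t * x$1 + cos t * x$2"
  by (simp_all add: Rot_def vector_matrix_mult_def sum_2)

lemma Dlt_mult_components [simp]:
  "(Dlt *v x) $ 1 = - x$2"
  "(Dlt *v x) $ 2 = x$1"
  by (simp_all add: Dlt_def matrix_vector_mult_def sum_2)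

lemma inner_vec2: "x \<bullet> (y::real^2) = x$1 * y$1 + x$2 * y$2"
  by (simp add: inner_vec_def sum_2)

lemma norm_vec2_sq: "(norm (x::real^2))\<^sup>2 = (x$1)\<^sup>2 + (x$2)\<^sup>2"
  by (simp only: power2_norm_eq_inner) (simp add: inner_vec2 power2_eq_square)

lemma Rot_0 [simp]: "Rot 0 = mat 1"
  by (simp add: Rot_def mat_def vec_eq_iff forall_2)

lemma orthogonal_matrix_Rot: "orthogonal_matrix (Rot t)"
  by (simp add: orthogonal_matrix Rot_def matrix_matrix_mult_def transpose_def mat_def
      vec_eq_iff forall_2 sum_2 power2_eq_square[symmetric])

lemma norm_Rot_mult [simp]: "norm (Rot t *v x) = norm x"
  using orthogonal_matrix_Rot
  by (simp add: orthogonal_transformation_norm orthogonal_transformation_matrix)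

lemma orthogonal_matrix_vector_mult_cancel:
  assumes "orthogonal_matrix (A :: real^'n^'n)"
  shows "(A *v x) v* A = x"
  using assms by (simp add: orthogonal_matrix matrix_vector_mul_assoc flip: transpose_matrix_vector)

lemma inner_Dlt_self [simp]: "x \<bullet> (Dlt *v x) = 0"
  by (simp add: inner_vec2)

lemma inner_matrix_vector_mult: "(A *v x) \<bullet> y = x \<bullet> (y v* (A :: real^'n^'m))"
  by (metis dot_lmul_matrix inner_commute)

lemma GDERIV_half_norm_affine_sq:
  fixes A :: "real^'n^'m"
  shows "GDERIV (\<lambda>q. 1/2 * (norm (A *v (q - c) + b))\<^sup>2) p :> (A *v (p - c) + b) v* A"
proof -
  have affine: "((\<lambda>q. A *v (q - c) + b) has_derivative (\<lambda>h. A *v h)) (at p)"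
    by (auto intro!: derivative_eq_intros
        bounded_linear.has_derivative[OF matrix_vector_mul_bounded_linear]
        simp: matrix_vector_mult_diff_distrib)
  have "((\<lambda>q. 1/2 * ((A *v (q - c) + b) \<bullet> (A *v (q - c) + b))) has_derivative
      (\<lambda>h. 1/2 * ((A *v (p - c) + b) \<bullet> (A *v h) + (A *v h) \<bullet> (A *v (p - c) + b)))) (at p)"
    by (rule has_derivative_mult_right[OF has_derivative_inner[OF affine affine]])
  then show ?thesis
    unfolding gderiv_def power2_norm_eq_inner
    by (simp add: inner_matrix_vector_mult inner_commute)
qed

lemma GDERIV_radial:
  fixes p c :: "'a::real_inner"
  assumes "p \<noteq> c" and "(f has_real_derivative f') (at (norm (p - c)))"
  shows "GDERIV (\<lambda>q. f (norm (q - c))) p :> (f' / norm (p - c)) *\<^sub>R (p - c)"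
proof -
  have "((\<lambda>q. q - c) has_derivative (\<lambda>h. h)) (at p)"
    by (auto intro!: derivative_eq_intros)
  from has_derivative_compose[OF this has_derivative_norm] assms(1)
  have "GDERIV (\<lambda>q. norm (q - c)) p :> sgn (p - c)"
    unfolding gderiv_def by simp
  from GDERIV_DERIV_compose[OF this assms(2)] show ?thesis
    by (simp add: sgn_div_norm divide_inverse)
qed

lemma phi_has_real_derivative:
  assumes "0 < r_s" and "0 < z"
  shows "(phi r_s has_real_derivative
           (if z \<le> r_s then 2 * (z - r_s) * ln (r_s / z) - (z - r_s)\<^sup>2 / z else 0)) (at z)"
proof -
  have "((\<lambda>x. if x \<in> {..r_s} then (x - r_s)\<^sup>2 * ln (r_s / x) else 0) has_vector_derivative
      (if z \<in> {..r_s} then 2 * (z - r_s) * ln (r_s / z) - (z - r_s)\<^sup>2 / z else 0))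
      (at z within UNIV)"
  proof (rule has_vector_derivative_If_within_closures[where T = "{r_s<..}"])
    show "((\<lambda>x. (x - r_s)\<^sup>2 * ln (r_s / x)) has_vector_derivative
        2 * (z - r_s) * ln (r_s / z) - (z - r_s)\<^sup>2 / z)
        (at z within {..r_s} \<union> (closure {..r_s} \<inter> closure {r_s<..}))"
      using assms unfolding has_real_derivative_iff_has_vector_derivative[symmetric]
      by (auto intro!: derivative_eq_intros simp: field_simps power2_eq_square)
  qed (auto simp: has_vector_derivative_def)
  then show ?thesis
    by (simp add: has_real_derivative_iff_has_vector_derivative phi_def[abs_def] atMost_def)
qed

lemma DERIV_half_norm_Rot_sq:
  "((\<lambda>t. 1/2 * (norm (Rot t *v u + b))\<^sup>2) has_real_derivative
      - (u \<bullet> ((Dlt ** transpose (Rot \<theta>)) *v b))) (at \<theta>)"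
proof -
  have norm_eq: "(\<lambda>t. 1/2 * (norm (Rot t *v u + b))\<^sup>2) =
      (\<lambda>t. 1/2 * ((cos t * u$1 - sin t * u$2 + b$1)\<^sup>2 + (sin t * u$1 + cos t * u$2 + b$2)\<^sup>2))"
    by (simp add: norm_vec2_sq)
  have inner_eq: "u \<bullet> ((Dlt ** transpose (Rot \<theta>)) *v b) =
      u$1 * (sin \<theta> * b$1 - cos \<theta> * b$2) + u$2 * (cos \<theta> * b$1 + sin \<theta> * b$2)"
    by (simp add: inner_vec2 flip: matrix_vector_mul_assoc)
  show ?thesis
    unfolding norm_eq inner_eq
    by (rule DERIV_cong, (rule derivative_eq_intros refl)+)
      (simp add: power2_eq_square algebra_simps)
qed

lemma Vmod_eq:
  "Vmod p_o r_o p_d r_s \<rho> \<gamma> q t =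
     1/2 * (norm (Rot t *v (q - p_o) + (p_o - p_d)))\<^sup>2 + \<rho> * phi r_s (norm (q - p_o) - r_o)
       + \<gamma>/2 * t\<^sup>2"
proof -
  have "Tr p_o q t - p_d = Rot t *v (q - p_o) + (p_o - p_d)"
    by (simp add: Tr_def algebra_simps)
  moreover have "norm (Tr p_o q t - p_o) = norm (q - p_o)"
    by (simp add: Tr_def)
  ultimately show ?thesis
    unfolding Vmod_def Vnav_def d_o_def by (simp only:)
qed

lemma inner_Dlt_eq_0_if_collinear:
  assumes "a *\<^sub>R u + v = 0"
  shows "u \<bullet> (Dlt *v v) = 0"
proof -
  from assms have "v = (- a) *\<^sub>R u"
    by (simp add: add_eq_0_iff2)
  then have "Dlt *v v = (- a) *\<^sub>R (Dlt *v u)"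
    by (simp only: matrix_vector_mult_scaleR)
  then show ?thesis by simp
qed

lemma critical_equations_iff:
  fixes u b :: "real^2"
  assumes "\<gamma> > 0"
  shows "(k *\<^sub>R u + transpose (Rot \<theta>) *v b = 0
          \<and> \<gamma> * \<theta> - u \<bullet> ((Dlt ** transpose (Rot \<theta>)) *v b) = 0)
     \<longleftrightarrow> \<theta> = 0 \<and> k *\<^sub>R u + b = 0" (is "?crit \<longleftrightarrow> _")
proof
  assume crit: ?crit
  then have "u \<bullet> ((Dlt ** transpose (Rot \<theta>)) *v b) = 0"
    using inner_Dlt_eq_0_if_collinear[of k u "transpose (Rot \<theta>) *v b"]
    by (simp flip: matrix_vector_mul_assoc)
  with crit assms have "\<theta> = 0" by simp
  with crit show "\<theta> = 0 \<and> k *\<^sub>R u + b = 0" by simp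
next
  assume "\<theta> = 0 \<and> k *\<^sub>R u + b = 0"
  then show ?crit
    using inner_Dlt_eq_0_if_collinear[of k u b] by simp
qed

lemma gradVnav_eq:
  "gradVnav p_o r_o p_d r_s \<rho> p =
     (1 + \<rho> * deriv (phi r_s) (d_o p_o r_o p) / norm (p - p_o)) *\<^sub>R (p - p_o) + (p_o - p_d)"
  by (simp add: gradVnav_def algebra_simps)

lemma modified_gradient_eq:
  "gradVnav p_o r_o p_d r_s \<rho> p + transpose (mat 1 - Rot \<theta>) *v (p_d - p_o) =
     (1 + \<rho> * deriv (phi r_s) (d_o p_o r_o p) / norm (p - p_o)) *\<^sub>R (p - p_o)
       + transpose (Rot \<theta>) *v (p_o - p_d)"
  by (simp add: gradVnav_eq algebra_simps)

lemma GDERIV_Vmod: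
  assumes "0 < r_s" and "0 \<le> r_o" and "r_o < norm (p - p_o)"
  shows "GDERIV (\<lambda>q. Vmod p_o r_o p_d r_s \<rho> \<gamma> q \<theta>) p :>
           gradVnav p_o r_o p_d r_s \<rho> p + transpose (mat 1 - Rot \<theta>) *v (p_d - p_o)"
proof -
  have quadratic: "GDERIV (\<lambda>q. 1/2 * (norm (Rot \<theta> *v (q - p_o) + (p_o - p_d)))\<^sup>2) p :>
      (p - p_o) + transpose (Rot \<theta>) *v (p_o - p_d)"
    using GDERIV_half_norm_affine_sq[of "Rot \<theta>" p_o "p_o - p_d" p]
    by (simp add: vector_matrix_left_distrib orthogonal_matrix_vector_mult_cancel
        orthogonal_matrix_Rot)
  have "DERIV (phi r_s) (norm (p - p_o) - r_o) :> deriv (phi r_s) (norm (p - p_o) - r_o)"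
    using phi_has_real_derivative[of r_s "norm (p - p_o) - r_o"] assms
    by (metis DERIV_imp_deriv diff_gt_0_iff_gt)
  from DERIV_chain2[OF this DERIV_diff[OF DERIV_ident DERIV_const]]
  have "DERIV (\<lambda>r. \<rho> * phi r_s (r - r_o)) (norm (p - p_o)) :>
      \<rho> * deriv (phi r_s) (norm (p - p_o) - r_o)"
    by (intro DERIV_cmult) simp
  moreover have "p \<noteq> p_o"
    using assms by auto
  ultimately have barrier: "GDERIV (\<lambda>q. \<rho> * phi r_s (norm (q - p_o) - r_o)) p :>
      (\<rho> * deriv (phi r_s) (d_o p_o r_o p) / norm (p - p_o)) *\<^sub>R (p - p_o)"
    unfolding d_o_def by (intro GDERIV_radial)
  show ?thesis
    unfolding Vmod_eq modified_gradient_eq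
    by (rule GDERIV_subst[OF GDERIV_add[OF GDERIV_add[OF quadratic barrier] GDERIV_const]])
      (simp add: algebra_simps)
qed

lemma DERIV_Vmod_theta:
  "((\<lambda>t. Vmod p_o r_o p_d r_s \<rho> \<gamma> p t) has_real_derivative
      \<gamma> * \<theta> - (p - p_o) \<bullet> ((Dlt ** transpose (Rot \<theta>)) *v (p_o - p_d))) (at \<theta>)"
  unfolding Vmod_eq
  by (rule DERIV_cong, (rule derivative_eq_intros DERIV_half_norm_Rot_sq refl)+) simp

theorem lemma2:
  fixes p_o p_d :: "real^2" and r_o \<epsilon> r_s \<rho> \<gamma> :: real
  assumes "r_o > 0" and "\<epsilon> > 0"
    and "p_d \<in> Xp p_o r_o \<epsilon>"
    and "\<epsilon> < r_s" and "r_s < d_o p_o r_o p_d"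
    and "\<rho> > 0" and "\<gamma> > 0"
  shows "(\<forall>p \<in> Xp p_o r_o \<epsilon>. \<forall>\<theta>::real.
            GDERIV (\<lambda>q. Vmod p_o r_o p_d r_s \<rho> \<gamma> q \<theta>) p :>
              (gradVnav p_o r_o p_d r_s \<rho> p + transpose (mat 1 - Rot \<theta>) *v (p_d - p_o))
          \<and> ((\<lambda>t. Vmod p_o r_o p_d r_s \<rho> \<gamma> p t) has_real_derivative
              (\<gamma> * \<theta> - (p - p_o) \<bullet> ((Dlt ** transpose (Rot \<theta>)) *v (p_o - p_d)))) (at \<theta>))
      \<and> {(p, \<theta>). p \<in> Xp p_o r_o \<epsilon>
            \<and> gradVnav p_o r_o p_d r_s \<rho> p + transpose (mat 1 - Rot \<theta>) *v (p_d - p_o) = 0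
            \<and> \<gamma> * \<theta> - (p - p_o) \<bullet> ((Dlt ** transpose (Rot \<theta>)) *v (p_o - p_d)) = 0}
        = {p \<in> Xp p_o r_o \<epsilon>. gradVnav p_o r_o p_d r_s \<rho> p = 0} \<times> {0}"
proof (intro conjI ballI allI GDERIV_Vmod DERIV_Vmod_theta)
  show "0 < r_s" and "0 \<le> r_o"
    using assms by linarith+
next
  fix p
  assume "p \<in> Xp p_o r_o \<epsilon>"
  with assms show "r_o < norm (p - p_o)"
    by (simp add: Xp_def)
qed (unfold modified_gradient_eq critical_equations_iff[OF \<open>\<gamma> > 0\<close>], auto simp: gradVnav_eq)

end
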